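(* Let $A\subset\mathbf{Z}_{\geq0}$ be finite with $0\in A$, $N=\#A\geq 2$, $A(x)=\sum_{a\in A}x^a$ irreducible over $\mathbf{Q}$. Suppose $A(x)$ has a spectrum $\{\theta_1,\dots,\theta_{N-1}\}$ with $\theta_1\notin\mathbf{Q}$. Then $A(x)$ has at least $N$ distinct roots $x$ with $|x|\neq1$, and $\deg A(x)\geq\frac{5N}{2}$.
   Context: A set $\{\theta_1,\dots,\theta_{N-1}\}\subset(0,1)$ is called a spectrum for $A(x)$ if the $\theta_j$ are pairwise distinct and, with $\theta_0=0$, $A(e^{2\pi i(\theta_i-\theta_j)})=0$ for all $0\leq i,j\leq N-1$ with $i\neq j$. *)

theory Defs
  imports "HOL-Analysis.Analysis" "HOL-Computational_Algebra.Computational_Algebra"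
begin

definition mask_poly :: "nat set \<Rightarrow> rat poly" where
  "mask_poly A = (\<Sum>a\<in>A. monom 1 a)"

definition is_spectrum :: "rat poly \<Rightarrow> nat \<Rightarrow> (nat \<Rightarrow> real) \<Rightarrow> bool" where
  "is_spectrum P N \<theta> \<longleftrightarrow>
     (\<forall>j\<in>{1..<N}. 0 < \<theta> j \<and> \<theta> j < 1) \<and>
     inj_on \<theta> {1..<N} \<and>
     (let \<theta>' = \<theta>(0 := 0) in
       \<forall>i<N. \<forall>j<N. i \<noteq> j \<longrightarrow>
         poly (map_poly of_rat P) (exp (2 * of_real pi * \<i> * of_real (\<theta>' i - \<theta>' j))) = (0::complex))"

end

(*
  Put theta_0 = 0 and s_k = exp (2 pi i theta_k); all ratios s_i / s_j (i ~= j) are roots of A.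
  Since A is irreducible over Q, in a tuple of roots of A one entry may be replaced by any other
  root w of A so that every integer polynomial relation of the tuple survives.  This substitute
  for a Galois conjugation is built one coordinate at a time, using that the norm
  prod_{A(r) = 0} F(r) of a relation F is again an integer relation.

  As s_1 is not a root of unity, Kronecker's theorem provides a root w of A off the unit circle.
  Replacing s_a / s_b by w in (s_a / s_b, s_1, ..., s_(N-1)) gives points t_0 = 1, ..., t_(N-1)
  with t_a = w t_b whose ratios are again roots of A.  For a = 1, b = 0 they do not all have the
  same modulus, and the ratios against a point of extreme modulus give at least N roots off the
  circle.  The functions k |-> log |t_k| are additive on the relations s_q^2 = s_b s_c and
  separate the indices, so a linear combination psi of them is injective; for q maximising psi
  the 2(N - 1) numbers s_q / s_b and s_b / s_q are distinct roots on the circle.  Roots off the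
  circle come in pairs x, 1/x and N = 2 is impossible, so deg A >= 2(N - 1) + 2 ceil(N/2) >= 5N/2.
*)

theory Submission
  imports Defs "HOL-Computational_Algebra.Field_as_Ring" "Jordan_Normal_Form.Char_Poly"
begin

section \<open>Rational polynomials over fields of characteristic zero\<close>

interpretation of_rat_poly_hom: map_poly_inj_idom_hom of_rat ..

lemma map_poly_of_rat_reflect:
  "map_poly of_rat (reflect_poly p) = reflect_poly (map_poly of_rat p)"
  by (intro poly_eqI) (simp add: coeff_reflect_poly)

lemma irreducible_dvd_of_common_root:
  fixes P p :: "rat poly" and z :: "'a::field_char_0"
  assumes "irreducible P" "poly (map_poly of_rat P) z = 0" "poly (map_poly of_rat p) z = 0"
  shows "P dvd p"
proof (rule ccontr)
  assume "\<not> P dvd p"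
  moreover have "prime_elem P" using assms(1) by (rule field_poly_irreducible_imp_prime)
  ultimately have "gcd P p = 1" by (meson coprimeI dvd_trans prime_elemD2 coprime_imp_gcd_eq_1)
  then obtain x y where "x * P + y * p = 1" by (metis bezout_coefficients prod.exhaust)
  then have "poly (map_poly of_rat (x * P + y * p)) z = 1" by simp
  then show False using assms by (simp add: hom_distribs)
qed

lemma rsquarefree_map_poly_of_rat_irreducible:
  fixes P :: "rat poly"
  assumes "irreducible P"
  shows "rsquarefree (map_poly (of_rat :: rat \<Rightarrow> 'a::field_char_0) P)"
  unfolding rsquarefree_roots
proof (intro allI notI)
  fix z :: 'a
  assume "poly (map_poly of_rat P) z = 0 \<and> poly (pderiv (map_poly of_rat P)) z = 0"
  then have "P dvd pderiv P"
    using irreducible_dvd_of_common_root[OF assms, of z "pderiv P"]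
    by (simp only: of_rat_hom.map_poly_pderiv)
  then have "degree P = 0" by simp
  then show False using assms by (metis irreducible_def is_unit_iff_degree)
qed

lemma irreducible_roots_closed_under_inverse:
  fixes P :: "rat poly" and z x :: "'a::field_char_0"
  assumes P: "irreducible P"
    and z: "z \<noteq> 0" "poly (map_poly of_rat P) z = 0" "poly (map_poly of_rat P) (inverse z) = 0"
    and x: "x \<noteq> 0" "poly (map_poly of_rat P) x = 0"
  shows "poly (map_poly of_rat P) (inverse x) = 0"
proof -
  have "poly (map_poly of_rat (reflect_poly P)) z = 0"
    using z by (simp add: map_poly_of_rat_reflect poly_reflect_poly_nz)
  then have "P dvd reflect_poly P"
    using irreducible_dvd_of_common_root[OF P z(2)] by blast
  then have "poly (map_poly of_rat (reflect_poly P)) x = 0"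
    using x(2) by (auto simp: hom_distribs elim!: dvdE)
  then show ?thesis
    using x(1) by (simp add: map_poly_of_rat_reflect poly_reflect_poly_nz)
qed

section \<open>Integer polynomial functions\<close>

text \<open>Polynomials with integer coefficients in the variables \<open>v 0, \<dots>, v (n - 1)\<close>, represented
  by the functions they induce.\<close>

inductive_set int_polyfun :: "nat \<Rightarrow> ((nat \<Rightarrow> complex) \<Rightarrow> complex) set" for n where
  const: "(\<lambda>v. of_int c) \<in> int_polyfun n"
| var: "i < n \<Longrightarrow> (\<lambda>v. v i) \<in> int_polyfun n"
| add: "f \<in> int_polyfun n \<Longrightarrow> g \<in> int_polyfun n \<Longrightarrow> (\<lambda>v. f v + g v) \<in> int_polyfun n"
| mult: "f \<in> int_polyfun n \<Longrightarrow> g \<in> int_polyfun n \<Longrightarrow> (\<lambda>v. f v * g v) \<in> int_polyfun n"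

lemma int_polyfun_0: "(\<lambda>v. 0) \<in> int_polyfun n"
  using int_polyfun.const[of 0] by simp

lemma int_polyfun_1: "(\<lambda>v. 1) \<in> int_polyfun n"
  using int_polyfun.const[of 1] by simp

lemma int_polyfun_Ints: "c \<in> \<int> \<Longrightarrow> (\<lambda>v. c) \<in> int_polyfun n"
  by (elim Ints_cases) (simp add: int_polyfun.const)

lemma int_polyfun_diff:
  "f \<in> int_polyfun n \<Longrightarrow> g \<in> int_polyfun n \<Longrightarrow> (\<lambda>v. f v - g v) \<in> int_polyfun n"
  using int_polyfun.add[OF _ int_polyfun.mult[OF int_polyfun.const[of "-1"]]] by simp

lemma int_polyfun_power: "f \<in> int_polyfun n \<Longrightarrow> (\<lambda>v. f v ^ k) \<in> int_polyfun n"
  by (induction k) (auto intro: int_polyfun.mult int_polyfun_1)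

lemma int_polyfun_sum:
  "finite S \<Longrightarrow> (\<And>s. s \<in> S \<Longrightarrow> f s \<in> int_polyfun n) \<Longrightarrow> (\<lambda>v. \<Sum>s\<in>S. f s v) \<in> int_polyfun n"
  by (induction S rule: finite_induct) (auto intro: int_polyfun.add int_polyfun_0)

lemma int_polyfun_prod:
  "finite S \<Longrightarrow> (\<And>s. s \<in> S \<Longrightarrow> f s \<in> int_polyfun n) \<Longrightarrow> (\<lambda>v. \<Prod>s\<in>S. f s v) \<in> int_polyfun n"
  by (induction S rule: finite_induct) (auto intro: int_polyfun.mult int_polyfun_1)

lemma int_polyfun_cong: "f \<in> int_polyfun n \<Longrightarrow> (\<And>i. i < n \<Longrightarrow> v i = v' i) \<Longrightarrow> f v = f v'"
  by (induction rule: int_polyfun.induct) auto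

lemma int_polyfun_compose:
  assumes "g \<in> int_polyfun m" "\<And>j. j < m \<Longrightarrow> h j \<in> int_polyfun n"
  shows "(\<lambda>v. g (\<lambda>j. h j v)) \<in> int_polyfun n"
  using assms by (induction rule: int_polyfun.induct) (auto intro: int_polyfun.intros)

lemma int_polyfun_0_const: "f \<in> int_polyfun 0 \<Longrightarrow> \<exists>c::int. \<forall>v. f v = of_int c"
  by (induction rule: int_polyfun.induct) (auto, metis of_int_add, metis of_int_mult)

lemma int_polyfun_poly:
  assumes "\<forall>k. coeff p k \<in> \<int>" "i < n"
  shows "(\<lambda>v. poly p (v i)) \<in> int_polyfun n"
  unfolding poly_altdef using assms
  by (intro int_polyfun_sum int_polyfun.mult int_polyfun_Ints int_polyfun_power int_polyfun.var) auto

lemma int_polyfun_det: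
  assumes "\<And>i j. i < d \<Longrightarrow> j < d \<Longrightarrow> (\<lambda>a. M a $$ (i, j)) \<in> int_polyfun m"
    and "\<And>a. M a \<in> carrier_mat d d"
  shows "(\<lambda>a. Determinant.det (M a)) \<in> int_polyfun m"
proof -
  have "Determinant.det (M a) =
      (\<Sum>p | p permutes {0..<d}. of_int (sign p) * (\<Prod>i = 0..<d. M a $$ (i, p i)))" for a
    using assms(2)[of a] by (simp add: det_def)
  moreover have "(\<lambda>a. \<Sum>p | p permutes {0..<d}. of_int (sign p) * (\<Prod>i = 0..<d. M a $$ (i, p i)))
      \<in> int_polyfun m"
  proof (intro int_polyfun_sum int_polyfun.mult int_polyfun.const int_polyfun_prod)
    fix p i assume "p \<in> {p. p permutes {0..<d}}" "i \<in> {0..<d}"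
    then show "(\<lambda>a. M a $$ (i, p i)) \<in> int_polyfun m"
      using assms(1) permutes_in_image by fastforce
  qed (auto simp: finite_permutations)
  ultimately show ?thesis by simp
qed

definition polyfun_in_var :: "nat \<Rightarrow> ((nat \<Rightarrow> complex) \<Rightarrow> complex) \<Rightarrow> bool" where
  "polyfun_in_var n f \<longleftrightarrow>
     (\<exists>c m. (\<forall>k. c k \<in> int_polyfun n) \<and> (\<forall>v. f v = (\<Sum>k<m. c k v * v n ^ k)))"

lemma polyfun_in_var_add:
  assumes "polyfun_in_var n f" "polyfun_in_var n g"
  shows "polyfun_in_var n (\<lambda>v. f v + g v)"
proof -
  obtain c1 m1 c2 m2 where
    c1: "\<forall>k. c1 k \<in> int_polyfun n" "\<forall>v. f v = (\<Sum>k<m1. c1 k v * v n ^ k)" and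
    c2: "\<forall>k. c2 k \<in> int_polyfun n" "\<forall>v. g v = (\<Sum>k<m2. c2 k v * v n ^ k)"
    using assms unfolding polyfun_in_var_def by blast
  define c1' where "c1' k = (if k < m1 then c1 k else (\<lambda>_. 0))" for k
  define c2' where "c2' k = (if k < m2 then c2 k else (\<lambda>_. 0))" for k
  have "(\<lambda>v. c1' k v + c2' k v) \<in> int_polyfun n" for k
    unfolding c1'_def c2'_def using c1 c2 by (intro int_polyfun.add) (simp_all add: int_polyfun_0)
  moreover have "f v + g v = (\<Sum>k<m1 + m2. (c1' k v + c2' k v) * v n ^ k)" for v
  proof -
    have "f v = (\<Sum>k<m1 + m2. c1' k v * v n ^ k)"
      unfolding c1(2)[rule_format] c1'_def by (rule sum.mono_neutral_cong_left) auto
    moreover have "g v = (\<Sum>k<m1 + m2. c2' k v * v n ^ k)"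
      unfolding c2(2)[rule_format] c2'_def by (rule sum.mono_neutral_cong_left) auto
    ultimately show ?thesis by (simp add: distrib_right sum.distrib)
  qed
  ultimately show ?thesis
    unfolding polyfun_in_var_def by (intro exI[of _ "\<lambda>k v. c1' k v + c2' k v"] exI[of _ "m1 + m2"]) auto
qed

lemma polyfun_in_var_mult:
  assumes "polyfun_in_var n f" "polyfun_in_var n g"
  shows "polyfun_in_var n (\<lambda>v. f v * g v)"
proof -
  obtain c1 m1 c2 m2 where
    c1: "\<forall>k. c1 k \<in> int_polyfun n" "\<forall>v. f v = (\<Sum>k<m1. c1 k v * v n ^ k)" and
    c2: "\<forall>k. c2 k \<in> int_polyfun n" "\<forall>v. g v = (\<Sum>k<m2. c2 k v * v n ^ k)"
    using assms unfolding polyfun_in_var_def by blast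
  define c where "c s v = (\<Sum>k<m1. \<Sum>l<m2. if k + l = s then c1 k v * c2 l v else 0)" for s v
  have "c s \<in> int_polyfun n" for s
    unfolding c_def
  proof (intro int_polyfun_sum)
    fix k l
    show "(\<lambda>v. if k + l = s then c1 k v * c2 l v else 0) \<in> int_polyfun n"
      using c1 c2 by (cases "k + l = s") (simp_all add: int_polyfun.mult int_polyfun_0)
  qed auto
  moreover have "f v * g v = (\<Sum>s<m1 + m2. c s v * v n ^ s)" for v
  proof -
    have "f v * g v = (\<Sum>k<m1. \<Sum>l<m2. c1 k v * c2 l v * v n ^ (k + l))"
      by (simp add: c1 c2 sum_product power_add mult_ac)
    also have "\<dots> = (\<Sum>k<m1. \<Sum>l<m2. \<Sum>s<m1 + m2.
                       if k + l = s then c1 k v * c2 l v * v n ^ s else 0)"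
      by (intro sum.cong refl) (simp add: sum.delta)
    also have "\<dots> = (\<Sum>k<m1. \<Sum>s<m1 + m2. \<Sum>l<m2.
                       if k + l = s then c1 k v * c2 l v * v n ^ s else 0)"
      by (intro sum.cong refl sum.swap)
    also have "\<dots> = (\<Sum>s<m1 + m2. \<Sum>k<m1. \<Sum>l<m2.
                       if k + l = s then c1 k v * c2 l v * v n ^ s else 0)"
      by (rule sum.swap)
    also have "\<dots> = (\<Sum>s<m1 + m2. c s v * v n ^ s)"
      unfolding c_def sum_distrib_right by (intro sum.cong refl) simp
    finally show ?thesis .
  qed
  ultimately show ?thesis unfolding polyfun_in_var_def by blast
qed

lemma int_polyfun_Suc_expand:
  assumes "f \<in> int_polyfun (Suc n)"
  shows "polyfun_in_var n f"
  using assms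
proof (induction rule: int_polyfun.induct)
  case (const c0)
  show ?case unfolding polyfun_in_var_def
    by (intro exI[of _ "\<lambda>k v. of_int (if k = 0 then c0 else 0)"] exI[of _ 1])
       (auto intro: int_polyfun.const int_polyfun_0)
next
  case (var i)
  show ?case
  proof (cases "i < n")
    case True
    have "(\<lambda>v. if k = 0 then v i else 0) \<in> int_polyfun n" for k
      by (cases "k = 0") (simp_all add: int_polyfun.var[OF True] int_polyfun_0)
    then show ?thesis unfolding polyfun_in_var_def
      by (intro exI[of _ "\<lambda>k v. if k = 0 then v i else 0"] exI[of _ 1]) auto
  next
    case False
    then have "i = n" using var by simp
    have "(\<lambda>v. if k = 1 then 1 else 0) \<in> int_polyfun n" for k
      by (cases "k = 1") (simp_all add: int_polyfun_1 int_polyfun_0)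
    then show ?thesis unfolding polyfun_in_var_def
      by (intro exI[of _ "\<lambda>k v. if k = 1 then 1 else 0"] exI[of _ 2])
         (auto simp: \<open>i = n\<close> numeral_2_eq_2 int_polyfun_0 int_polyfun_1)
  qed
qed (simp_all add: polyfun_in_var_add polyfun_in_var_mult)

lemma int_polyfun_1_poly:
  assumes "f \<in> int_polyfun 1"
  shows "\<exists>p :: rat poly. (\<forall>k. coeff p k \<in> \<int>) \<and> (\<forall>v. f v = poly (map_poly of_rat p) (v 0))"
proof -
  obtain c m where c: "\<forall>k. c k \<in> int_polyfun 0" "\<forall>v. f v = (\<Sum>k<m. c k v * v 0 ^ k)"
    using int_polyfun_Suc_expand[of f 0] assms unfolding polyfun_in_var_def by auto
  have "\<forall>k. \<exists>e::int. \<forall>v. c k v = of_int e" using c(1) int_polyfun_0_const by blast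
  then obtain e where e: "\<And>k v. c k v = of_int (e k)" by metis
  define p where "p = (\<Sum>k<m. monom (of_int (e k) :: rat) k)"
  have "coeff p k \<in> \<int>" for k
    by (simp add: p_def coeff_sum coeff_monom)
  moreover have "f v = poly (map_poly of_rat p) (v 0)" for v
    by (simp add: p_def c(2) e poly_sum poly_monom hom_distribs)
  ultimately show ?thesis by blast
qed

lemma int_polyfun_fun_upd:
  assumes "c \<in> \<int>" "k < n"
  shows "(\<lambda>v. (v(i := c)) k) \<in> int_polyfun n"
  using assms by (cases "k = i") (simp_all add: int_polyfun_Ints int_polyfun.var)

section \<open>Norms over the roots of a monic integer polynomial\<close>

text \<open>\<open>pow_rem c d n k\<close> is the coefficient of \<open>X ^ k\<close> in the remainder of \<open>X ^ n\<close> modulo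
  \<open>X ^ d + (\<Sum>k<d. c k * X ^ k)\<close>.\<close>

fun pow_rem :: "(nat \<Rightarrow> int) \<Rightarrow> nat \<Rightarrow> nat \<Rightarrow> nat \<Rightarrow> int" where
  "pow_rem c d 0 k = (if k = 0 then 1 else 0)"
| "pow_rem c d (Suc n) k =
     (if k = 0 then 0 else pow_rem c d n (k - 1)) - pow_rem c d n (d - 1) * c k"

lemma power_eq_pow_rem:
  fixes r :: "'a::comm_ring_1"
  assumes "d > 0" and r: "r ^ d = - (\<Sum>k<d. of_int (c k) * r ^ k)"
  shows "r ^ n = (\<Sum>k<d. of_int (pow_rem c d n k) * r ^ k)"
proof (induction n)
  case 0
  have "(\<Sum>k<d. of_int (pow_rem c d 0 k) * r ^ k) = (\<Sum>k<d. if k = 0 then 1 else (0::'a))"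
    by (intro sum.cong) auto
  then show ?case using \<open>d > 0\<close> by simp
next
  case (Suc n)
  obtain e where d: "d = Suc e" using \<open>d > 0\<close> gr0_implies_Suc by blast
  define f where "f k = (of_int (pow_rem c d n k) :: 'a)" for k
  have "r ^ Suc n = (\<Sum>k<d. f k * r ^ Suc k)"
    using Suc by (simp add: f_def sum_distrib_left mult_ac)
  also have "\<dots> = (\<Sum>k<e. f k * r ^ Suc k) + f e * r ^ d"
    by (simp add: d)
  also have "\<dots> = (\<Sum>k<e. f k * r ^ Suc k) - (\<Sum>k<d. f e * of_int (c k) * r ^ k)"
    by (simp add: r sum_distrib_left mult.assoc)
  also have "(\<Sum>k<e. f k * r ^ Suc k) = (\<Sum>k<d. (if k = 0 then 0 else f (k - 1)) * r ^ k)"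
    unfolding d sum.lessThan_Suc_shift by simp
  also have "(\<Sum>k<d. (if k = 0 then 0 else f (k - 1)) * r ^ k) - (\<Sum>k<d. f e * of_int (c k) * r ^ k)
      = (\<Sum>k<d. of_int (pow_rem c d (Suc n) k) * r ^ k)"
    unfolding sum_subtractf[symmetric] by (intro sum.cong refl) (auto simp: d f_def left_diff_distrib)
  finally show ?case .
qed

lemma monic_root_power_degree:
  fixes Q :: "'a::comm_ring_1 poly"
  assumes "lead_coeff Q = 1" "poly Q r = 0"
  shows "r ^ degree Q = - (\<Sum>k<degree Q. coeff Q k * r ^ k)"
proof -
  have "0 = (\<Sum>k<degree Q. coeff Q k * r ^ k) + r ^ degree Q"
    using assms by (simp add: poly_altdef lessThan_Suc_atMost[symmetric])
  then show ?thesis by (simp add: eq_neg_iff_add_eq_0 add.commute)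
qed

lemma det_power_matrix_nonzero:
  fixes x :: "nat \<Rightarrow> 'a::idom"
  assumes "inj_on x {..<d}"
  shows "Determinant.det (mat d d (\<lambda>(i, k). x i ^ k)) \<noteq> 0"
proof
  assume "Determinant.det (mat d d (\<lambda>(i, k). x i ^ k)) = 0"
  then obtain v where v: "v \<in> carrier_vec d" "v \<noteq> 0\<^sub>v d" "mat d d (\<lambda>(i, k). x i ^ k) *\<^sub>v v = 0\<^sub>v d"
    using det_0_iff_vec_prod_zero[OF mat_carrier] by blast
  define p where "p = (\<Sum>k<d. monom (v $ k) k)"
  have coeff_p: "coeff p k = (if k < d then v $ k else 0)" for k
    by (simp add: p_def coeff_sum coeff_monom)
  have "p \<noteq> 0"
  proof
    assume "p = 0"
    then have "v $ k = 0" if "k < d" for k using coeff_p[of k] that by simp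
    then have "v = 0\<^sub>v d" using v(1) by (intro eq_vecI) auto
    with v(2) show False ..
  qed
  have "degree p < d"
    using coeff_p \<open>p \<noteq> 0\<close> by (metis leading_coeff_0_iff not_less)
  have "poly p (x i) = 0" if "i < d" for i
  proof -
    have "(mat d d (\<lambda>(i, k). x i ^ k) *\<^sub>v v) $ i = 0" using v that by simp
    then show ?thesis
      using that v(1) by (simp add: p_def poly_sum poly_monom scalar_prod_def atLeast0LessThan mult_ac)
  qed
  then have "x ` {..<d} \<subseteq> {z. poly p z = 0}" by auto
  then have "card (x ` {..<d}) \<le> degree p"
    using card_mono[OF poly_roots_finite[OF \<open>p \<noteq> 0\<close>]] card_poly_roots_bound[OF \<open>p \<noteq> 0\<close>]
    by (meson order_trans)
  with \<open>degree p < d\<close> show False using card_image[OF assms] by simp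
qed

lemma power_matrix_mult_rem_matrix:
  fixes x :: "nat \<Rightarrow> 'a::comm_ring_1" and a :: "nat \<Rightarrow> 'a"
  assumes pow: "\<And>i n. i < d \<Longrightarrow> x i ^ n = (\<Sum>k<d. of_int (pow_rem c d n k) * x i ^ k)"
  shows "mat d d (\<lambda>(i, k). x i ^ k) * mat d d (\<lambda>(k, j). \<Sum>s<m. a s * of_int (pow_rem c d (j + s) k))
       = mat d d (\<lambda>(i, j). if i = j then (\<Sum>k<m. a k * x i ^ k) else 0) * mat d d (\<lambda>(i, k). x i ^ k)"
    (is "?V * ?M = ?D * ?V")
proof (rule eq_matI)
  fix i j assume "i < dim_row (?D * ?V)" "j < dim_col (?D * ?V)"
  then have i: "i < d" and j: "j < d" by auto
  have "(?V * ?M) $$ (i, j) = (\<Sum>k<d. x i ^ k * (\<Sum>s<m. a s * of_int (pow_rem c d (j + s) k)))"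
    using i j by (simp add: scalar_prod_def atLeast0LessThan)
  also have "\<dots> = (\<Sum>k<d. \<Sum>s<m. a s * (of_int (pow_rem c d (j + s) k) * x i ^ k))"
    by (simp add: sum_distrib_left mult_ac)
  also have "\<dots> = (\<Sum>s<m. a s * (\<Sum>k<d. of_int (pow_rem c d (j + s) k) * x i ^ k))"
    by (subst sum.swap) (simp add: sum_distrib_left)
  also have "\<dots> = (\<Sum>s<m. a s * x i ^ (j + s))"
    by (simp only: pow[OF i, symmetric])
  also have "\<dots> = (\<Sum>s<m. a s * x i ^ s) * x i ^ j"
    by (simp add: sum_distrib_left sum_distrib_right power_add mult_ac)
  also have "\<dots> = (?D * ?V) $$ (i, j)"
  proof -
    have "(?D * ?V) $$ (i, j) = (\<Sum>k<d. (if i = k then (\<Sum>s<m. a s * x i ^ s) else 0) * x k ^ j)"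
      using i j by (simp add: scalar_prod_def atLeast0LessThan)
    also have "\<dots> = (\<Sum>k<d. if i = k then (\<Sum>s<m. a s * x i ^ s) * x k ^ j else 0)"
      by (intro sum.cong) auto
    finally show ?thesis using i by simp
  qed
  finally show "(?V * ?M) $$ (i, j) = (?D * ?V) $$ (i, j)" .
qed auto

lemma det_rem_matrix_eq_prod:
  fixes x a :: "nat \<Rightarrow> 'a::idom"
  assumes inj: "inj_on x {..<d}"
    and pow: "\<And>i n. i < d \<Longrightarrow> x i ^ n = (\<Sum>k<d. of_int (pow_rem c d n k) * x i ^ k)"
  shows "Determinant.det (mat d d (\<lambda>(k, j). \<Sum>s<m. a s * of_int (pow_rem c d (j + s) k)))
       = (\<Prod>i<d. \<Sum>k<m. a k * x i ^ k)"
proof -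
  define V where "V = mat d d (\<lambda>(i, k). x i ^ k)"
  define M where "M = mat d d (\<lambda>(k, j). \<Sum>s<m. a s * of_int (pow_rem c d (j + s) k))"
  define D where "D = mat d d (\<lambda>(i, j). if i = j then (\<Sum>k<m. a k * x i ^ k) else 0)"
  have V: "V \<in> carrier_mat d d" and M: "M \<in> carrier_mat d d" and D: "D \<in> carrier_mat d d"
    by (simp_all add: V_def M_def D_def)
  have "Determinant.det V \<noteq> 0"
    unfolding V_def using inj by (rule det_power_matrix_nonzero)
  moreover have "V * M = D * V"
    unfolding V_def M_def D_def by (rule power_matrix_mult_rem_matrix) (rule pow)
  then have "Determinant.det V * Determinant.det M = Determinant.det D * Determinant.det V"
    using det_mult[OF V M] det_mult[OF D V] by metis
  ultimately have "Determinant.det M = Determinant.det D"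
    by (metis mult.commute mult_left_cancel)
  also have "Determinant.det D = (\<Prod>i = 0..<d. \<Sum>k<m. a k * x i ^ k)"
  proof -
    have "upper_triangular D" by (simp add: D_def upper_triangular_def)
    moreover have "diag_mat D = map (\<lambda>i. \<Sum>k<m. a k * x i ^ k) [0..<d]"
      by (simp add: diag_mat_def D_def)
    ultimately show ?thesis
      using det_upper_triangular[OF _ D] by (simp add: prod.distinct_set_conv_list[symmetric])
  qed
  finally show ?thesis by (simp add: M_def atLeast0LessThan)
qed

lemma int_polyfun_norm:
  fixes Q :: "complex poly"
  assumes sf: "rsquarefree Q" and monic: "lead_coeff Q = 1" and int: "\<forall>k. coeff Q k \<in> \<int>"
  shows "(\<lambda>a. \<Prod>r | poly Q r = 0. \<Sum>k<m. a k * r ^ k) \<in> int_polyfun m"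
proof (cases "degree Q = 0")
  case True
  then have "{r. poly Q r = 0} = {}" using monic by (auto elim: degree_eq_zeroE)
  then show ?thesis by (simp add: int_polyfun_1)
next
  case False
  \<comment> \<open>the norm is the determinant of multiplication by \<open>\<Sum>k<m. a k * X ^ k\<close> on \<open>\<complex>[X]/(Q)\<close>,
    written in the basis \<open>1, X, \<dots>, X ^ (d - 1)\<close>\<close>
  define d where "d = degree Q"
  define R where "R = {r. poly Q r = 0}"
  have "Q \<noteq> 0" using monic by auto
  then have "finite R" "card R = d"
    using sf by (simp_all add: R_def d_def poly_roots_finite rsquarefree_card_degree)
  then obtain x where x: "bij_betw x {0..<d} R"
    using ex_bij_betw_nat_finite by blast
  have "\<forall>k. \<exists>i. coeff Q k = of_int i" using int by (auto elim: Ints_cases)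
  then obtain c where c: "\<And>k. coeff Q k = of_int (c k)" by metis
  have pow: "x i ^ n = (\<Sum>k<d. of_int (pow_rem c d n k) * x i ^ k)" if "i < d" for i n
  proof (rule power_eq_pow_rem)
    have "poly Q (x i) = 0" using x that by (auto simp: bij_betw_def R_def)
    then show "x i ^ d = - (\<Sum>k<d. of_int (c k) * x i ^ k)"
      using monic_root_power_degree[OF monic] by (simp add: d_def c)
  qed (use False in \<open>simp add: d_def\<close>)
  define M where "M a = mat d d (\<lambda>(k, j). \<Sum>s<m. a s * of_int (pow_rem c d (j + s) k))"
    for a :: "nat \<Rightarrow> complex"
  have "inj_on x {..<d}" using x by (simp add: bij_betw_def atLeast0LessThan)
  then have norm_eq: "(\<Prod>r\<in>R. \<Sum>k<m. a k * r ^ k) = Determinant.det (M a)" for a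
    using prod.reindex_bij_betw[OF x, of "\<lambda>r. \<Sum>k<m. a k * r ^ k"]
    by (simp add: M_def det_rem_matrix_eq_prod[OF _ pow] atLeast0LessThan)
  have entries: "(\<lambda>a. \<Sum>s<m. a s * of_int (pow_rem c d (j + s) k)) \<in> int_polyfun m" for j k
    by (intro int_polyfun_sum int_polyfun.mult int_polyfun.var int_polyfun.const) auto
  have carrier: "M a \<in> carrier_mat d d" for a by (simp add: M_def)
  have "(\<lambda>a. Determinant.det (M a)) \<in> int_polyfun m"
    by (rule int_polyfun_det[OF _ carrier]) (simp add: M_def entries)
  then show ?thesis unfolding R_def[symmetric] by (simp add: norm_eq)
qed

section \<open>Specialisations\<close>

text \<open>Every integer polynomial relation among \<open>z 0, \<dots>, z (n - 1)\<close> also holds among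
  \<open>y 0, \<dots>, y (n - 1)\<close>; when the \<open>z i\<close> are roots of an irreducible polynomial this plays the
  role of a field embedding sending \<open>z i\<close> to \<open>y i\<close>.\<close>

definition specializes :: "nat \<Rightarrow> (nat \<Rightarrow> complex) \<Rightarrow> (nat \<Rightarrow> complex) \<Rightarrow> bool" where
  "specializes n z y \<longleftrightarrow> (\<forall>f \<in> int_polyfun n. f z = 0 \<longrightarrow> f y = 0)"

lemma specializesD: "specializes n z y \<Longrightarrow> f \<in> int_polyfun n \<Longrightarrow> f z = 0 \<Longrightarrow> f y = 0"
  unfolding specializes_def by blast

lemma specializes_fun_upd_Ints:
  assumes "specializes n z y" "c \<in> \<int>"
  shows "specializes n (z(i := c)) (y(i := c))"
  unfolding specializes_def
proof (intro ballI impI)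
  fix f assume f: "f \<in> int_polyfun n" "f (z(i := c)) = 0"
  have "(\<lambda>v. f (v(i := c))) \<in> int_polyfun n"
    using int_polyfun_compose[OF f(1), of "\<lambda>j v. (v(i := c)) j"] int_polyfun_fun_upd[OF assms(2)]
    by (simp only: fun_upd_def)
  then show "f (y(i := c)) = 0"
    using specializesD[OF assms(1)] f(2) by blast
qed

lemma exists_int_polyfun_nonzero_on:
  assumes "finite T" "\<forall>t\<in>T. \<exists>f\<in>int_polyfun n. f z = 0 \<and> f (Y t) \<noteq> 0"
  shows "\<exists>F\<in>int_polyfun n. F z = 0 \<and> (\<forall>t\<in>T. F (Y t) \<noteq> 0)"
  using assms
proof (induction T rule: finite_induct)
  case empty
  then show ?case using int_polyfun_0 by auto
next
  case (insert b T)
  then obtain F where F: "F \<in> int_polyfun n" "F z = 0" "\<forall>t\<in>T. F (Y t) \<noteq> 0" by auto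
  obtain f where f: "f \<in> int_polyfun n" "f z = 0" "f (Y b) \<noteq> 0" using insert.prems by auto
  \<comment> \<open>F + c f works for all but finitely many integers c\<close>
  define S where "S = (\<lambda>t. - F (Y t) / f (Y t)) ` insert b T"
  have "finite (of_nat -` S :: nat set)"
    using insert.hyps unfolding S_def by (intro finite_vimageI) (auto simp: inj_def)
  then obtain c :: nat where "c \<notin> of_nat -` S"
    using ex_new_if_finite[OF infinite_UNIV_nat] by blast
  then have c: "of_nat c \<notin> S" by simp
  define G where "G v = F v + of_nat c * f v" for v
  have "G \<in> int_polyfun n"
    unfolding G_def using int_polyfun.add[OF F(1) int_polyfun.mult[OF int_polyfun.const[of "int c"] f(1)]]
    by simp
  moreover have "G z = 0" using F f by (simp add: G_def)
  moreover have "G (Y t) \<noteq> 0" if "t \<in> insert b T" for t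
  proof (cases "f (Y t) = 0")
    case True
    then show ?thesis using F that f(3) by (auto simp: G_def)
  next
    case False
    show ?thesis
    proof
      assume "G (Y t) = 0"
      then have "of_nat c = - F (Y t) / f (Y t)"
        using False by (simp add: G_def field_simps eq_neg_iff_add_eq_0 add.commute)
      then show False using c that unfolding S_def by blast
    qed
  qed
  ultimately show ?case by blast
qed

lemma specializes_extend:
  fixes Q :: "complex poly"
  assumes Q: "rsquarefree Q" "lead_coeff Q = 1" "\<forall>k. coeff Q k \<in> \<int>"
    and spec: "specializes n z y" and root: "poly Q (z n) = 0"
  shows "\<exists>\<beta>. poly Q \<beta> = 0 \<and> specializes (Suc n) z (y(n := \<beta>))"
proof (rule ccontr)
  define R where "R = {r. poly Q r = 0}"
  assume "\<not> ?thesis"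
  then have "\<forall>\<beta>\<in>R. \<exists>f\<in>int_polyfun (Suc n). f z = 0 \<and> f (y(n := \<beta>)) \<noteq> 0"
    unfolding specializes_def R_def by blast
  moreover have "finite R"
    unfolding R_def by (rule poly_roots_finite) (use Q(2) in auto)
  ultimately obtain F where F: "F \<in> int_polyfun (Suc n)" "F z = 0" "\<forall>\<beta>\<in>R. F (y(n := \<beta>)) \<noteq> 0"
    using exists_int_polyfun_nonzero_on[of R "Suc n" z "\<lambda>\<beta>. y(n := \<beta>)"] by blast
  obtain c m where c: "\<forall>k. c k \<in> int_polyfun n" "\<forall>v. F v = (\<Sum>k<m. c k v * v n ^ k)"
    using int_polyfun_Suc_expand[OF F(1)] unfolding polyfun_in_var_def by blast
  \<comment> \<open>the norm of F over the last coordinate is a relation among the first n coordinates\<close>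
  define G where "G v = (\<Prod>r\<in>R. \<Sum>k<m. c k v * r ^ k)" for v
  have "(\<lambda>v. \<Prod>r | poly Q r = 0. \<Sum>k<m. c k v * r ^ k) \<in> int_polyfun n"
    by (rule int_polyfun_compose[OF int_polyfun_norm[OF Q, of m], of c]) (use c(1) in simp)
  then have "G \<in> int_polyfun n" by (simp add: G_def[abs_def] R_def)
  moreover have "G z = 0"
  proof -
    have "z n \<in> R" "(\<Sum>k<m. c k z * z n ^ k) = 0" using root F(2) c(2) by (auto simp: R_def)
    then show ?thesis using \<open>finite R\<close> unfolding G_def by (intro prod_zero) auto
  qed
  ultimately have "G y = 0" by (rule specializesD[OF spec])
  then obtain r where r: "r \<in> R" "(\<Sum>k<m. c k y * r ^ k) = 0"
    using \<open>finite R\<close> by (auto simp: G_def)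
  have "c k (y(n := r)) = c k y" for k
    by (rule int_polyfun_cong[of "c k"]) (use c(1) in auto)
  then have "F (y(n := r)) = 0" using c(2) r(2) by simp
  with F(3) r(1) show False by blast
qed

lemma specializes_conjugate:
  fixes P :: "rat poly"
  assumes P: "irreducible P" "lead_coeff P = 1" "\<forall>k. coeff P k \<in> \<int>"
    and roots: "\<And>i. i < n \<Longrightarrow> poly (map_poly of_rat P) (z i) = 0"
    and w: "poly (map_poly of_rat P) w = 0" and "0 < n"
  shows "\<exists>y. y 0 = w \<and> specializes n z y"
proof -
  define Q :: "complex poly" where "Q = map_poly of_rat P"
  have "coeff Q k \<in> \<int>" for k
  proof -
    obtain i where "coeff P k = of_int i" using P(3) by (meson Ints_cases)
    then show ?thesis by (simp add: Q_def)
  qed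
  then have Q: "rsquarefree Q" "lead_coeff Q = 1" "\<forall>k. coeff Q k \<in> \<int>"
    using P by (simp_all add: Q_def rsquarefree_map_poly_of_rat_irreducible)
  have base: "specializes 1 z (\<lambda>_. w)"
    unfolding specializes_def
  proof (intro ballI impI)
    fix f assume f: "f \<in> int_polyfun 1" "f z = 0"
    obtain p where p: "\<forall>v. f v = poly (map_poly of_rat p) (v 0)"
      using int_polyfun_1_poly[OF f(1)] by blast
    then have "P dvd p"
      using f(2) roots[OF \<open>0 < n\<close>] by (intro irreducible_dvd_of_common_root[OF P(1)]) auto
    then show "f (\<lambda>_. w) = 0" using w p by (auto simp: hom_distribs elim!: dvdE)
  qed
  have "\<exists>y. y 0 = w \<and> specializes (Suc k) z y" if "k < n" for k
    using that
  proof (induction k)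
    case 0
    then show ?case using base by auto
  next
    case (Suc k)
    then obtain y where y: "y 0 = w" "specializes (Suc k) z y" by auto
    moreover have "poly Q (z (Suc k)) = 0" using roots[OF Suc.prems] by (simp add: Q_def)
    ultimately obtain \<beta> where "specializes (Suc (Suc k)) z (y(Suc k := \<beta>))"
      using specializes_extend[OF Q] by blast
    moreover have "(y(Suc k := \<beta>)) 0 = w" using y(1) by simp
    ultimately show ?case by blast
  qed
  then show ?thesis using \<open>0 < n\<close> by (metis Suc_pred lessI)
qed

lemma homogenized_poly_eq:
  fixes x y :: "'a::field"
  assumes "y \<noteq> 0"
  shows "(\<Sum>k\<le>degree p. coeff p k * x ^ k * y ^ (degree p - k)) = y ^ degree p * poly p (x / y)"
  unfolding poly_altdef sum_distrib_left
proof (rule sum.cong)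
  fix k assume "k \<in> {..degree p}"
  then have "y ^ degree p = y ^ k * y ^ (degree p - k)"
    by (simp flip: power_add)
  then show "coeff p k * x ^ k * y ^ (degree p - k) = y ^ degree p * (coeff p k * (x / y) ^ k)"
    using assms by (simp add: power_divide field_simps)
qed simp

lemma specializes_poly_root:
  assumes "specializes n s t" "i < n" "\<forall>k. coeff Q k \<in> \<int>" "poly Q (s i) = 0"
  shows "poly Q (t i) = 0"
  using specializesD[OF assms(1) int_polyfun_poly[OF assms(3,2)]] assms(4) by simp

lemma specializes_poly_ratio:
  assumes "specializes n s t" "i < n" "j < n" "\<forall>k. coeff Q k \<in> \<int>"
    and "s j \<noteq> 0" "t j \<noteq> 0" "poly Q (s i / s j) = 0"
  shows "poly Q (t i / t j) = 0"
proof -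
  define f where "f v = (\<Sum>k\<le>degree Q. coeff Q k * v i ^ k * v j ^ (degree Q - k))" for v
  have "f \<in> int_polyfun n"
    unfolding f_def[abs_def] using assms(2-4)
    by (intro int_polyfun_sum int_polyfun.mult int_polyfun_Ints int_polyfun_power int_polyfun.var) auto
  moreover have "f s = 0" using assms(5,7) by (simp add: f_def homogenized_poly_eq)
  ultimately have "f t = 0" by (rule specializesD[OF assms(1)])
  then show ?thesis using assms(6) by (simp add: f_def homogenized_poly_eq)
qed

section \<open>Kronecker's theorem\<close>

lemma norm_coeff_prod_linear_le:
  fixes b :: "'a \<Rightarrow> complex"
  assumes "finite S" "\<forall>s\<in>S. cmod (b s) \<le> 1"
  shows "cmod (coeff (\<Prod>s\<in>S. [:- b s, 1:]) j) \<le> 2 ^ card S"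
  using assms
proof (induction S arbitrary: j rule: finite_induct)
  case empty
  then show ?case by (cases j) auto
next
  case (insert x S)
  define p where "p = (\<Prod>s\<in>S. [:- b s, 1:])"
  have IH: "cmod (coeff p i) \<le> 2 ^ card S" for i using insert by (simp add: p_def)
  have "(\<Prod>s\<in>insert x S. [:- b s, 1:]) = [:- b x, 1:] * p"
    using insert by (simp add: p_def)
  also have "\<dots> = Polynomial.smult (- b x) p + pCons 0 p"
    by (simp add: mult_pCons_left)
  finally have e: "coeff (\<Prod>s\<in>insert x S. [:- b s, 1:]) j = - b x * coeff p j + coeff (pCons 0 p) j"
    by simp
  have c1: "cmod (- b x * coeff p j) \<le> 2 ^ card S"
  proof -
    have "cmod (- b x * coeff p j) = cmod (b x) * cmod (coeff p j)" by (simp add: norm_mult)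
    also have "\<dots> \<le> 1 * 2 ^ card S"
      using insert.prems IH[of j] by (intro mult_mono) auto
    finally show ?thesis by simp
  qed
  have c2: "cmod (coeff (pCons 0 p) j) \<le> 2 ^ card S"
    using IH by (cases j) auto
  have "cmod (coeff (\<Prod>s\<in>insert x S. [:- b s, 1:]) j) \<le> 2 ^ card S + 2 ^ card S"
    unfolding e using c1 c2 norm_triangle_le by (smt (verit) norm_triangle_ineq)
  then show ?case using insert by simp
qed

lemma finite_polys_coeffs_in:
  assumes "finite A"
  shows "finite {p :: 'a::zero poly. degree p \<le> n \<and> (\<forall>i. coeff p i \<in> A)}"
proof (rule inj_on_finite[where f = "\<lambda>p. restrict (coeff p) {..n}"])
  show "inj_on (\<lambda>p. restrict (coeff p) {..n}) {p. degree p \<le> n \<and> (\<forall>i. coeff p i \<in> A)}"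
  proof (rule inj_onI, rule poly_eqI)
    fix p q i
    assume "p \<in> {p. degree p \<le> n \<and> (\<forall>i. coeff p i \<in> A)}"
      and "q \<in> {p. degree p \<le> n \<and> (\<forall>i. coeff p i \<in> A)}"
      and eq: "restrict (coeff p) {..n} = restrict (coeff q) {..n}"
    show "coeff p i = coeff q i"
    proof (cases "i \<le> n")
      case True
      then show ?thesis using fun_cong[OF eq, of i] by simp
    next
      case False
      then show ?thesis using \<open>p \<in> _\<close> \<open>q \<in> _\<close> by (simp add: coeff_eq_0)
    qed
  qed
  show "(\<lambda>p. restrict (coeff p) {..n}) ` {p. degree p \<le> n \<and> (\<forall>i. coeff p i \<in> A)}
      \<subseteq> PiE {..n} (\<lambda>_. A)"
    by (intro image_subsetI) (simp add: restrict_PiE_iff)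
  show "finite (PiE {..n} (\<lambda>_. A))" using assms by (simp add: finite_PiE)
qed

lemma root_of_unity_if_finite_powers:
  fixes z :: "'a::field"
  assumes "z \<noteq> 0" "finite (range (\<lambda>k. z ^ Suc k))"
  shows "\<exists>k>0. z ^ k = 1"
proof -
  have "\<not> inj (\<lambda>k. z ^ Suc k)"
    using assms(2) finite_imageD infinite_UNIV_nat by blast
  then obtain a b where ab: "a \<noteq> b" "z ^ Suc a = z ^ Suc b" unfolding inj_def by blast
  have *: "\<exists>k>0. z ^ k = 1" if "a < b" "z ^ Suc a = z ^ Suc b" for a b
  proof -
    have "Suc b = Suc a + (b - a)" using \<open>a < b\<close> by simp
    then have "z ^ Suc a * z ^ (b - a) = z ^ Suc b" by (metis power_add)
    also have "\<dots> = z ^ Suc a * 1" by (simp only: that(2) mult_1_right)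
    finally have "z ^ (b - a) = 1" using assms(1) by simp
    then show ?thesis using that by (intro exI[of _ "b - a"]) simp
  qed
  from ab consider "a < b" "z ^ Suc a = z ^ Suc b" | "b < a" "z ^ Suc b = z ^ Suc a"
    by (metis linorder_neqE_nat)
  then show ?thesis by cases (use * in blast)+
qed

lemma int_coeffs_prod_power_roots:
  fixes Q :: "complex poly"
  assumes Q: "rsquarefree Q" "lead_coeff Q = 1" "\<forall>k. coeff Q k \<in> \<int>"
  shows "coeff (\<Prod>r | poly Q r = 0. [:- (r ^ n), 1:]) j \<in> \<int>"
proof -
  define E where "E = (\<Prod>r | poly Q r = 0. [:- (r ^ n), 1:])"
  define a where
    "a k = (\<lambda>v :: nat \<Rightarrow> complex. (if k = 0 then v 0 else 0) - (if k = n then 1 else 0))" for k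
  have "a k \<in> int_polyfun 1" for k
  proof -
    have "(\<lambda>v :: nat \<Rightarrow> complex. if k = 0 then v 0 else 0) \<in> int_polyfun 1"
      by (cases "k = 0") (simp_all add: int_polyfun_0 int_polyfun.var)
    moreover have "(\<lambda>v :: nat \<Rightarrow> complex. if k = n then 1 else 0) \<in> int_polyfun 1"
      by (cases "k = n") (simp_all add: int_polyfun_0 int_polyfun_1)
    ultimately show ?thesis unfolding a_def by (rule int_polyfun_diff)
  qed
  then have "(\<lambda>v. \<Prod>r | poly Q r = 0. \<Sum>k<Suc n. a k v * r ^ k) \<in> int_polyfun 1"
    by (rule int_polyfun_compose[OF int_polyfun_norm[OF Q]])
  moreover have a_sum: "(\<Sum>k<Suc n. a k v * r ^ k) = v 0 - r ^ n" for v r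
  proof -
    have "(\<Sum>k<Suc n. a k v * r ^ k) =
        (\<Sum>k<Suc n. if k = 0 then v 0 * r ^ k else 0) - (\<Sum>k<Suc n. if k = n then r ^ k else 0)"
      unfolding sum_subtractf[symmetric] by (intro sum.cong) (auto simp: a_def)
    then show ?thesis by simp
  qed
  ultimately have "(\<lambda>v. poly E (v 0)) \<in> int_polyfun 1"
    by (simp add: E_def poly_prod)
  from int_polyfun_1_poly[OF this] obtain p
    where p: "(\<forall>k. coeff p k \<in> \<int>) \<and>
      (\<forall>v :: nat \<Rightarrow> complex. poly E (v 0) = poly (map_poly of_rat p) (v 0))" ..
  have "poly E x = poly (map_poly of_rat p) x" for x
    using spec[OF conjunct2[OF p], of "\<lambda>_. x"] by simp
  then have "E = map_poly of_rat p" by (rule poly_ext)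
  moreover obtain i where "coeff p j = of_int i" using conjunct1[OF p] by (meson Ints_cases)
  ultimately show ?thesis by (simp add: E_def)
qed

lemma kronecker_root_of_unity:
  fixes Q :: "complex poly"
  assumes Q: "rsquarefree Q" "lead_coeff Q = 1" "\<forall>k. coeff Q k \<in> \<int>"
    and circle: "\<forall>r. poly Q r = 0 \<longrightarrow> cmod r = 1" and z: "poly Q z = 0"
  shows "\<exists>k>0. z ^ k = 1"
proof (rule root_of_unity_if_finite_powers)
  define R where "R = {r. poly Q r = 0}"
  define E where "E n = (\<Prod>r\<in>R. [:- (r ^ n), 1:])" for n
  define B where "B = {p :: complex poly. degree p \<le> card R \<and>
                        (\<forall>j. coeff p j \<in> of_int ` {- (2 ^ card R)..2 ^ card R})}"
  have "finite R"
    unfolding R_def by (rule poly_roots_finite) (use Q(2) in auto)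
  have "E n \<in> B - {0}" for n
  proof -
    have "degree (E n) \<le> card R"
      unfolding E_def using degree_prod_sum_le[OF \<open>finite R\<close>, of "\<lambda>r. [:- (r ^ n), 1:]"] by simp
    moreover have "coeff (E n) j \<in> of_int ` {- (2 ^ card R)..2 ^ card R}" for j
    proof -
      obtain i where i: "coeff (E n) j = of_int i"
        using int_coeffs_prod_power_roots[OF Q] by (metis E_def R_def Ints_cases)
      have "cmod (coeff (E n) j) \<le> 2 ^ card R"
        unfolding E_def using \<open>finite R\<close> circle
        by (intro norm_coeff_prod_linear_le) (auto simp: R_def norm_power)
      then have "\<bar>i\<bar> \<le> 2 ^ card R" using i by (simp flip: of_int_abs)
      then show ?thesis using i by (auto simp: abs_le_iff)
    qed
    moreover have "E n \<noteq> 0" using \<open>finite R\<close> by (simp add: E_def)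
    ultimately show ?thesis by (simp add: B_def)
  qed
  moreover have "poly (E n) (z ^ n) = 0" for n
    using \<open>finite R\<close> z by (auto simp: E_def R_def poly_prod)
  ultimately have "range (\<lambda>k. z ^ Suc k) \<subseteq> (\<Union>p\<in>B - {0}. {x. poly p x = 0})"
    by blast
  moreover have "finite (\<Union>p\<in>B - {0}. {x. poly p x = 0})"
    by (rule finite_UN_I) (auto simp: B_def finite_polys_coeffs_in intro: poly_roots_finite)
  ultimately show "finite (range (\<lambda>k. z ^ Suc k))" by (rule finite_subset)
  show "z \<noteq> 0" using circle z by auto
qed

section \<open>Counting roots from ratio sets\<close>

lemma two_card_le_card_roots_off_circle:
  fixes Q :: "complex poly"
  assumes Q: "Q \<noteq> 0" and W0: "0 \<notin> W"
    and ratios: "\<forall>u\<in>W. \<forall>v\<in>W. u \<noteq> v \<longrightarrow> poly Q (u / v) = 0"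
    and s: "s \<in> W" and X: "X \<subseteq> W" "finite X"
    and side: "(\<forall>u\<in>X. cmod u < cmod s) \<or> (\<forall>u\<in>X. cmod s < cmod u)"
  shows "2 * card X \<le> card {x. poly Q x = 0 \<and> cmod x \<noteq> 1}"
proof -
  define Off where "Off = {x. poly Q x = 0 \<and> cmod x \<noteq> 1}"
  have "finite Off"
    unfolding Off_def using poly_roots_finite[OF Q] by (rule finite_subset[rotated]) auto
  have s0: "cmod s > 0" using s W0 by auto
  have u0: "cmod u > 0" if "u \<in> X" for u using that X W0 by auto
  have ne: "cmod u \<noteq> cmod s" "u \<noteq> s" if "u \<in> X" for u using side that by auto
  have "inj_on (\<lambda>u. s / u) X" "inj_on (\<lambda>u. u / s) X"
    using s0 u0 by (auto simp: inj_on_def field_simps)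
  moreover have "(\<lambda>u. s / u) ` X \<inter> (\<lambda>u. u / s) ` X = {}"
  proof -
    have "cmod s / cmod u \<noteq> cmod u' / cmod s" if "u \<in> X" "u' \<in> X" for u u'
    proof -
      have "cmod u * cmod u' < cmod s * cmod s \<or> cmod s * cmod s < cmod u * cmod u'"
        using side that s0 u0[OF that(1)]
        by (metis mult_strict_mono norm_ge_zero)
      then show ?thesis using s0 u0[OF that(1)] by (auto simp: field_simps)
    qed
    then show ?thesis by (fastforce simp: norm_divide dest: arg_cong[where f = cmod])
  qed
  moreover have sub: "(\<lambda>u. s / u) ` X \<union> (\<lambda>u. u / s) ` X \<subseteq> Off"
  proof -
    have "poly Q (s / u) = 0" "poly Q (u / s) = 0" "cmod (s / u) \<noteq> 1" "cmod (u / s) \<noteq> 1"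
      if "u \<in> X" for u
      using ratios s X that ne[OF that] s0 u0[OF that] by (auto simp: norm_divide)
    then show ?thesis by (auto simp: Off_def)
  qed
  ultimately have "card ((\<lambda>u. s / u) ` X \<union> (\<lambda>u. u / s) ` X) = 2 * card X"
    using \<open>finite X\<close> by (simp add: card_Un_disjoint card_image)
  then show ?thesis
    using card_mono[OF \<open>finite Off\<close> sub] by (simp add: Off_def)
qed

lemma card_le_card_roots_off_circle:
  fixes Q :: "complex poly"
  assumes Q: "Q \<noteq> 0" and W: "finite W" "0 \<notin> W"
    and ratios: "\<forall>u\<in>W. \<forall>v\<in>W. u \<noteq> v \<longrightarrow> poly Q (u / v) = 0"
    and uv: "u \<in> W" "v \<in> W" "cmod u \<noteq> cmod v"
  shows "card W \<le> card {x. poly Q x = 0 \<and> cmod x \<noteq> 1}"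
proof -
  \<comment> \<open>the elements S of maximal and T of minimal modulus are disjoint, so one of them has at most
    half of the elements of W\<close>
  define M where "M = Max (cmod ` W)"
  define m where "m = Min (cmod ` W)"
  define S where "S = {u\<in>W. cmod u = M}"
  define T where "T = {u\<in>W. cmod u = m}"
  have "M \<in> cmod ` W" "m \<in> cmod ` W"
    unfolding M_def m_def using W uv by (auto intro: Max_in Min_in)
  then obtain s t where s: "s \<in> W" "cmod s = M" and t: "t \<in> W" "cmod t = m" by auto
  have le_M: "cmod u \<le> M" and ge_m: "m \<le> cmod u" if "u \<in> W" for u
    using that W unfolding M_def m_def by auto
  have "m < M"
  proof (rule ccontr)
    assume "\<not> m < M"
    then have "cmod u = cmod v"
      using le_M[OF uv(1)] le_M[OF uv(2)] ge_m[OF uv(1)] ge_m[OF uv(2)] by linarith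
    with uv(3) show False ..
  qed
  then have "S \<inter> T = {}" by (auto simp: S_def T_def)
  moreover have "S \<union> T \<subseteq> W" "finite S" "finite T"
    using W by (auto simp: S_def T_def)
  ultimately have "card S + card T \<le> card W"
    using W by (metis card_Un_disjoint card_mono)
  moreover have "2 * card (W - S) \<le> card {x. poly Q x = 0 \<and> cmod x \<noteq> 1}"
    by (rule two_card_le_card_roots_off_circle[OF Q W(2) ratios s(1)])
       (use W le_M s in \<open>auto simp: S_def less_le\<close>)
  moreover have "2 * card (W - T) \<le> card {x. poly Q x = 0 \<and> cmod x \<noteq> 1}"
    by (rule two_card_le_card_roots_off_circle[OF Q W(2) ratios t(1)])
       (use W ge_m t in \<open>auto simp: T_def less_le\<close>)
  moreover have "card (W - S) = card W - card S" "card (W - T) = card W - card T"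
    using W by (auto simp: S_def T_def intro!: card_Diff_subset)
  ultimately show ?thesis by linarith
qed

lemma exists_inj_on_in_linear_family:
  fixes \<Psi> :: "('a \<Rightarrow> real) set"
  assumes "finite I"
    and separating: "\<forall>i\<in>I. \<forall>j\<in>I. i \<noteq> j \<longrightarrow> (\<exists>\<psi>\<in>\<Psi>. \<psi> i \<noteq> \<psi> j)"
    and linear: "\<forall>\<psi>\<in>\<Psi>. \<forall>\<phi>\<in>\<Psi>. \<forall>c. (\<lambda>k. \<psi> k + c * \<phi> k) \<in> \<Psi>"
    and zero: "(\<lambda>_. 0) \<in> \<Psi>"
  shows "\<exists>\<psi>\<in>\<Psi>. inj_on \<psi> I"
proof -
  have "\<exists>\<psi>\<in>\<Psi>. \<forall>(i, j)\<in>Pairs. \<psi> i \<noteq> \<psi> j"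
    if "finite Pairs" "Pairs \<subseteq> {(i, j). i \<in> I \<and> j \<in> I \<and> i \<noteq> j}" for Pairs
    using that
  proof (induction Pairs rule: finite_induct)
    case empty
    then show ?case using zero by blast
  next
    case (insert p Pairs)
    obtain i j where p: "p = (i, j)" "i \<in> I" "j \<in> I" "i \<noteq> j" using insert.prems by auto
    obtain \<psi> where \<psi>: "\<psi> \<in> \<Psi>" "\<forall>(a, b)\<in>Pairs. \<psi> a \<noteq> \<psi> b" using insert by auto
    obtain \<phi> where \<phi>: "\<phi> \<in> \<Psi>" "\<phi> i \<noteq> \<phi> j" using separating p by blast
    \<comment> \<open>\<psi> + c \<phi> separates all pairs in insert p Pairs unless c is one of finitely many values\<close>
    define bad where "bad = (\<lambda>(a, b). (\<psi> b - \<psi> a) / (\<phi> a - \<phi> b)) ` insert p Pairs"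
    have "finite bad" using insert.hyps by (simp add: bad_def)
    then obtain c where c: "c \<notin> bad" using ex_new_if_finite[OF infinite_UNIV_char_0] by blast
    define \<eta> where "\<eta> k = \<psi> k + c * \<phi> k" for k
    have "\<eta> a \<noteq> \<eta> b" if ab: "(a, b) \<in> insert p Pairs" for a b
    proof (cases "\<phi> a = \<phi> b")
      case True
      then have "(a, b) \<in> Pairs" using ab \<phi>(2) p(1) by auto
      then show ?thesis using \<psi>(2) True by (auto simp: \<eta>_def)
    next
      case False
      have "c \<noteq> (\<psi> b - \<psi> a) / (\<phi> a - \<phi> b)" using c ab unfolding bad_def by force
      then show ?thesis using False by (simp add: \<eta>_def field_simps)
    qed
    moreover have "\<eta> \<in> \<Psi>" using linear \<psi>(1) \<phi>(1) by (simp add: \<eta>_def[abs_def])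
    ultimately show ?case by blast
  qed
  moreover have "finite {(i, j). i \<in> I \<and> j \<in> I \<and> i \<noteq> j}"
    by (rule finite_subset[of _ "I \<times> I"]) (use \<open>finite I\<close> in auto)
  ultimately obtain \<psi> where "\<psi> \<in> \<Psi>" "\<forall>(i, j)\<in>{(i, j). i \<in> I \<and> j \<in> I \<and> i \<noteq> j}. \<psi> i \<noteq> \<psi> j"
    by blast
  then show ?thesis by (auto simp: inj_on_def)
qed

lemma card_roots_on_circle_ge_ratios:
  fixes Q :: "complex poly" and s :: "'a \<Rightarrow> complex" and \<psi> :: "'a \<Rightarrow> real"
  assumes Q: "Q \<noteq> 0" and I: "finite I" "I \<noteq> {}"
    and ratios: "\<forall>i\<in>I. \<forall>j\<in>I. i \<noteq> j \<longrightarrow> poly Q (s i / s j) = 0"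
    and unit: "\<forall>i\<in>I. cmod (s i) = 1" and inj: "inj_on s I" and inj_\<psi>: "inj_on \<psi> I"
    and additive: "\<forall>q\<in>I. \<forall>b\<in>I. \<forall>c\<in>I. s q * s q = s b * s c \<longrightarrow> \<psi> b + \<psi> c = 2 * \<psi> q"
  shows "2 * (card I - 1) \<le> card {x. poly Q x = 0 \<and> cmod x = 1}"
proof -
  \<comment> \<open>with q maximising \<psi>, the 2(|I| - 1) roots s q / s b and s b / s q are distinct\<close>
  have "Max (\<psi> ` I) \<in> \<psi> ` I" using I by (intro Max_in) auto
  then obtain q where q: "q \<in> I" "\<psi> q = Max (\<psi> ` I)" by auto
  define B where "B = I - {q}"
  have max: "\<psi> b < \<psi> q" if "b \<in> B" for b
    using that q I inj_\<psi> by (auto simp: B_def inj_on_def order_less_le)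
  have s0: "s i \<noteq> 0" if "i \<in> I" for i using unit that by auto
  have "inj_on (\<lambda>b. s q / s b) B" "inj_on (\<lambda>b. s b / s q) B"
    using s0 q inj by (auto simp: B_def inj_on_def field_simps)
  moreover have "(\<lambda>b. s q / s b) ` B \<inter> (\<lambda>b. s b / s q) ` B = {}"
  proof (rule ccontr)
    assume "\<not> ?thesis"
    then obtain b c where bc: "b \<in> B" "c \<in> B" "s q / s b = s c / s q" by auto
    then have "s q * s q = s b * s c" using s0 q by (auto simp: B_def field_simps)
    then have "\<psi> b + \<psi> c = 2 * \<psi> q" using additive bc q by (auto simp: B_def)
    with max[OF bc(1)] max[OF bc(2)] show False by simp
  qed
  moreover have sub: "(\<lambda>b. s q / s b) ` B \<union> (\<lambda>b. s b / s q) ` B \<subseteq> {x. poly Q x = 0 \<and> cmod x = 1}"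
    using ratios unit q by (auto simp: B_def norm_divide)
  moreover have fin: "finite {x. poly Q x = 0 \<and> cmod x = 1}"
    using poly_roots_finite[OF Q] by (rule finite_subset[rotated]) auto
  ultimately have "card ((\<lambda>b. s q / s b) ` B \<union> (\<lambda>b. s b / s q) ` B) = 2 * card B"
    using I by (simp add: B_def card_Un_disjoint card_image)
  moreover have "card B = card I - 1" using I q by (simp add: B_def)
  ultimately show ?thesis
    using card_mono[OF fin sub] by simp
qed

lemma card_roots_off_circle_eq_double:
  fixes Q :: "complex poly"
  assumes "Q \<noteq> 0" and inverse_closed: "\<And>x. poly Q x = 0 \<Longrightarrow> x \<noteq> 0 \<and> poly Q (inverse x) = 0"
  shows "card {x. poly Q x = 0 \<and> cmod x \<noteq> 1} = 2 * card {x. poly Q x = 0 \<and> cmod x > 1}"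
proof -
  define Out where "Out = {x. poly Q x = 0 \<and> cmod x > 1}"
  define In where "In = {x. poly Q x = 0 \<and> cmod x < 1}"
  have fin: "finite Out" "finite In"
    using poly_roots_finite[OF \<open>Q \<noteq> 0\<close>] by (auto simp: Out_def In_def elim: finite_subset[rotated])
  have "inverse ` Out = In"
  proof
    show "inverse ` Out \<subseteq> In"
      using inverse_closed by (auto simp: Out_def In_def norm_inverse inverse_less_1_iff)
    show "In \<subseteq> inverse ` Out"
    proof
      fix x assume x: "x \<in> In"
      then have "inverse x \<in> Out"
        using inverse_closed by (auto simp: Out_def In_def norm_inverse one_less_inverse_iff)
      then show "x \<in> inverse ` Out" by (rule rev_image_eqI) simp
    qed
  qed
  then have "card In = card Out" by (metis card_image inj_on_inverseI inverse_inverse_eq)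
  moreover have "{x. poly Q x = 0 \<and> cmod x \<noteq> 1} = Out \<union> In" "Out \<inter> In = {}"
    by (auto simp: Out_def In_def)
  ultimately show ?thesis using fin by (simp add: card_Un_disjoint Out_def)
qed

section \<open>Mask polynomials with a spectrum\<close>

lemma coeff_mask_poly: "finite A \<Longrightarrow> coeff (mask_poly A) k = (if k \<in> A then 1 else 0)"
  by (simp add: mask_poly_def coeff_sum coeff_monom)

lemma poly_mask_poly:
  "finite A \<Longrightarrow> poly (map_poly of_rat (mask_poly A)) x = (\<Sum>a\<in>A. (x :: 'a::field_char_0) ^ a)"
  by (simp add: mask_poly_def hom_distribs poly_sum poly_monom)

lemma degree_mask_poly: "finite A \<Longrightarrow> A \<noteq> {} \<Longrightarrow> degree (mask_poly A) = Max A"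
  by (intro antisym degree_le le_degree) (auto simp: coeff_mask_poly)

lemma lead_coeff_mask_poly: "finite A \<Longrightarrow> A \<noteq> {} \<Longrightarrow> lead_coeff (mask_poly A) = 1"
  by (simp add: degree_mask_poly coeff_mask_poly)

locale mask_spectrum =
  fixes A :: "nat set" and N :: nat and \<theta> :: "nat \<Rightarrow> real"
  assumes finite_A: "finite A" and zero_in_A: "0 \<in> A" and card_A: "N = card A" and two_le_N: "2 \<le> N"
    and irreducible: "irreducible (mask_poly A)"
    and spectrum: "is_spectrum (mask_poly A) N \<theta>"
    and irrational: "\<theta> 1 \<notin> \<rat>"
begin

abbreviation Q :: "complex poly" where
  "Q \<equiv> map_poly of_rat (mask_poly A)"

definition s :: "nat \<Rightarrow> complex" where
  "s k = exp (2 * of_real pi * \<i> * of_real ((\<theta>(0 := 0)) k))"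

lemma mask_poly_monic: "lead_coeff (mask_poly A) = 1"
  using lead_coeff_mask_poly finite_A zero_in_A by blast

lemma mask_poly_int_coeffs: "\<forall>k. coeff (mask_poly A) k \<in> \<int>"
  by (simp add: coeff_mask_poly[OF finite_A])

lemma Q_monic_int: "lead_coeff Q = 1" "\<forall>k. coeff Q k \<in> \<int>"
  using mask_poly_monic by (simp_all add: coeff_mask_poly[OF finite_A])

lemma rsquarefree_Q: "rsquarefree Q"
  using irreducible by (rule rsquarefree_map_poly_of_rat_irreducible)

lemma Q_nonzero: "Q \<noteq> 0"
  using Q_monic_int by auto

lemma poly_Q_0: "poly Q 0 = 1"
  by (subst poly_mask_poly[OF finite_A]) (simp add: power_0_left sum.delta' zero_in_A finite_A)

lemma root_nonzero: "poly Q x = 0 \<Longrightarrow> x \<noteq> 0"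
  using poly_Q_0 by auto

lemma poly_Q_1: "poly Q 1 \<noteq> 0"
  by (subst poly_mask_poly[OF finite_A]) (use card_A two_le_N in simp)

lemma s_0: "s 0 = 1"
  by (simp add: s_def)

lemma norm_s: "cmod (s k) = 1"
  by (simp add: s_def norm_exp_eq_Re)

lemma s_nonzero: "s k \<noteq> 0"
  by (simp add: s_def)

lemma s_ratio_root:
  assumes "i < N" "j < N" "i \<noteq> j"
  shows "poly Q (s i / s j) = 0"
proof -
  have "s i / s j = exp (2 * of_real pi * \<i> * of_real ((\<theta>(0 := 0)) i - (\<theta>(0 := 0)) j))"
    by (simp only: s_def of_real_diff right_diff_distrib exp_diff)
  then show ?thesis
    using spectrum assms unfolding is_spectrum_def Let_def by simp
qed

lemma s_root: "0 < k \<Longrightarrow> k < N \<Longrightarrow> poly Q (s k) = 0"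
  using s_ratio_root[of k 0] two_le_N by (simp add: s_0)

lemma inj_on_s: "inj_on s {..<N}"
proof (rule inj_onI, rule ccontr)
  fix i j assume "i \<in> {..<N}" "j \<in> {..<N}" "s i = s j" "i \<noteq> j"
  then show False using s_ratio_root[of i j] poly_Q_1 s_nonzero[of j] by simp
qed

lemma s_1_not_root_of_unity:
  assumes "0 < k"
  shows "s 1 ^ k \<noteq> 1"
proof
  assume "s 1 ^ k = 1"
  then have "exp (of_nat k * (2 * of_real pi * \<i> * of_real (\<theta> 1))) = 1"
    by (simp add: s_def exp_of_nat_mult)
  then obtain n :: int where "of_nat k * (2 * pi * \<theta> 1) = of_int (2 * n) * pi"
    by (auto simp: exp_eq_1 mult_ac)
  then have "\<theta> 1 = of_int n / of_nat k"
    using assms by (simp add: field_simps)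
  then show False using irrational by simp
qed

lemma roots_closed_under_inverse: "poly Q x = 0 \<Longrightarrow> poly Q (inverse x) = 0"
proof (rule irreducible_roots_closed_under_inverse[OF irreducible s_nonzero[of 1] s_root])
  show "poly Q (inverse (s 1)) = 0"
    using s_ratio_root[of 0 1] two_le_N by (simp add: s_0 divide_inverse)
qed (use two_le_N root_nonzero in auto)

lemma exists_root_off_circle: "\<exists>w. poly Q w = 0 \<and> cmod w \<noteq> 1"
proof (rule ccontr)
  assume "\<not> ?thesis"
  then have "\<exists>k>0. s 1 ^ k = 1"
    using two_le_N by (intro kronecker_root_of_unity[OF rsquarefree_Q Q_monic_int]) (auto intro: s_root)
  then show False using s_1_not_root_of_unity by blast
qed

lemma exists_conjugate_point:
  assumes ab: "a < N" "b < N" "a \<noteq> b" and w: "poly Q w = 0"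
  shows "\<exists>y. y 0 = w \<and> specializes N (s(0 := s a / s b)) y"
proof (rule specializes_conjugate[OF irreducible mask_poly_monic mask_poly_int_coeffs _ w])
  show "poly Q ((s(0 := s a / s b)) i) = 0" if "i < N" for i
    using that ab s_ratio_root s_root by (cases "i = 0") auto
qed (use two_le_N in auto)

lemma conjugate_spectrum:
  assumes ab: "a < N" "b < N" "a \<noteq> b" and w: "poly Q w = 0"
  obtains t where "t 0 = 1" "t a = w * t b" "\<forall>k<N. t k \<noteq> 0"
    "\<forall>i<N. \<forall>j<N. i \<noteq> j \<longrightarrow> poly Q (t i / t j) = 0"
    "\<forall>q<N. \<forall>b<N. \<forall>c<N. s q * s q = s b * s c \<longrightarrow> t q * t q = t b * t c"
proof -
  define z where "z = s(0 := s a / s b)"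
  obtain y where y: "y 0 = w" "specializes N z y"
    using exists_conjugate_point[OF ab w] unfolding z_def by blast
  define t where "t = y(0 := 1)"
  have s_eq: "s = z(0 := 1)" by (auto simp: z_def s_0)
  have spec: "specializes N s t"
    unfolding s_eq t_def by (rule specializes_fun_upd_Ints[OF y(2)]) simp
  have t0: "t 0 = 1" by (simp add: t_def)
  have t_nonzero: "\<forall>k<N. t k \<noteq> 0"
  proof (intro allI impI)
    fix k assume "k < N"
    then show "t k \<noteq> 0"
      using t0 root_nonzero specializes_poly_root[OF spec _ Q_monic_int(2) s_root]
      by (cases "k = 0") auto
  qed
  have ratios: "\<forall>i<N. \<forall>j<N. i \<noteq> j \<longrightarrow> poly Q (t i / t j) = 0"
  proof (intro allI impI)
    fix i j assume ij: "i < N" "j < N" "i \<noteq> j"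
    show "poly Q (t i / t j) = 0"
      by (rule specializes_poly_ratio[OF spec ij(1,2) Q_monic_int(2) s_nonzero _ s_ratio_root[OF ij]])
         (use t_nonzero ij in auto)
  qed
  have relations: "\<forall>q<N. \<forall>b<N. \<forall>c<N. s q * s q = s b * s c \<longrightarrow> t q * t q = t b * t c"
  proof (intro allI impI)
    fix q b c assume "q < N" "b < N" "c < N" "s q * s q = s b * s c"
    then show "t q * t q = t b * t c"
      using specializesD[OF spec, of "\<lambda>v. v q * v q - v b * v c"]
      by (simp add: int_polyfun_diff int_polyfun.mult int_polyfun.var)
  qed
  have "t a = w * t b"
  proof -
    define f where "f v = v 0 * (v(0 := 1)) b - (v(0 := 1)) a" for v :: "nat \<Rightarrow> complex"
    have "f \<in> int_polyfun N"
      unfolding f_def[abs_def] using ab two_le_N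
      by (intro int_polyfun_diff int_polyfun.mult int_polyfun.var int_polyfun_fun_upd) auto
    moreover have "f z = 0" by (simp add: f_def flip: s_eq) (simp add: z_def s_nonzero)
    ultimately have "f y = 0" by (rule specializesD[OF y(2)])
    then show ?thesis by (simp add: f_def y(1) flip: t_def)
  qed
  then show ?thesis by (rule that[OF t0 _ t_nonzero ratios relations])
qed

lemma card_roots_off_circle_ge: "N \<le> card {x. poly Q x = 0 \<and> cmod x \<noteq> 1}"
proof -
  obtain w where w: "poly Q w = 0" "cmod w \<noteq> 1" using exists_root_off_circle by blast
  obtain t where t: "t 0 = 1" "t 1 = w * t 0" "\<forall>k<N. t k \<noteq> 0"
    "\<forall>i<N. \<forall>j<N. i \<noteq> j \<longrightarrow> poly Q (t i / t j) = 0"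
    "\<forall>q<N. \<forall>b<N. \<forall>c<N. s q * s q = s b * s c \<longrightarrow> t q * t q = t b * t c"
    by (rule conjugate_spectrum[of 1 0 w, OF _ _ _ w(1)]) (use two_le_N in auto)
  have "inj_on t {..<N}"
  proof (rule inj_onI, rule ccontr)
    fix i j assume ij: "i \<in> {..<N}" "j \<in> {..<N}" "t i = t j" "i \<noteq> j"
    then have "poly Q (t i / t j) = 0" using t(4) by blast
    moreover have "t i / t j = 1" using t(3) ij by simp
    ultimately show False using poly_Q_1 by simp
  qed
  then have "card (t ` {..<N}) = N" by (simp add: card_image)
  moreover have "card (t ` {..<N}) \<le> card {x. poly Q x = 0 \<and> cmod x \<noteq> 1}"
  proof (rule card_le_card_roots_off_circle[OF Q_nonzero])
    show "1 \<in> t ` {..<N}" by (rule rev_image_eqI[of 0]) (use t(1) two_le_N in auto)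
    show "w \<in> t ` {..<N}" by (rule rev_image_eqI[of 1]) (use t(1,2) two_le_N in auto)
  qed (use t(3,4) w(2) in auto)
  ultimately show ?thesis by simp
qed

definition s_additive :: "(nat \<Rightarrow> real) \<Rightarrow> bool" where
  "s_additive \<psi> \<longleftrightarrow>
     (\<forall>q\<in>{..<N}. \<forall>b\<in>{..<N}. \<forall>c\<in>{..<N}. s q * s q = s b * s c \<longrightarrow> \<psi> b + \<psi> c = 2 * \<psi> q)"

lemma log_moduli_separate:
  assumes ij: "i < N" "j < N" "i \<noteq> j"
  shows "\<exists>\<psi>. s_additive \<psi> \<and> \<psi> i \<noteq> \<psi> j"
proof -
  obtain w where w: "poly Q w = 0" "cmod w \<noteq> 1" using exists_root_off_circle by blast
  obtain t where t: "t 0 = 1" "t i = w * t j" "\<forall>k<N. t k \<noteq> 0"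
    "\<forall>i<N. \<forall>j<N. i \<noteq> j \<longrightarrow> poly Q (t i / t j) = 0"
    "\<forall>q<N. \<forall>b<N. \<forall>c<N. s q * s q = s b * s c \<longrightarrow> t q * t q = t b * t c"
    by (rule conjugate_spectrum[OF ij w(1)])
  define \<psi> where "\<psi> k = ln (cmod (t k))" for k
  have pos: "cmod (t k) > 0" if "k < N" for k using t(3) that by simp
  have "s_additive \<psi>"
    unfolding s_additive_def
  proof (intro ballI impI)
    fix q b c assume "q \<in> {..<N}" "b \<in> {..<N}" "c \<in> {..<N}" "s q * s q = s b * s c"
    then have qbc: "q < N" "b < N" "c < N" "s q * s q = s b * s c" by auto
    then have "cmod (t q) * cmod (t q) = cmod (t b) * cmod (t c)"
      using t(5) by (metis norm_mult)
    then have "ln (cmod (t q) * cmod (t q)) = ln (cmod (t b) * cmod (t c))" by (rule arg_cong)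
    then show "\<psi> b + \<psi> c = 2 * \<psi> q"
      unfolding \<psi>_def mult_2 using pos qbc by (simp only: ln_mult_pos)
  qed
  moreover have "w \<noteq> 0" using t(2,3) ij by auto
  then have "\<psi> i \<noteq> \<psi> j"
    using t(2,3) ij w(2) by (simp add: \<psi>_def norm_mult ln_mult)
  ultimately show ?thesis by blast
qed

lemma card_roots_on_circle_ge: "2 * (N - 1) \<le> card {x. poly Q x = 0 \<and> cmod x = 1}"
proof -
  have linear: "\<forall>\<psi>\<in>Collect s_additive. \<forall>\<phi>\<in>Collect s_additive. \<forall>c.
      (\<lambda>k. \<psi> k + c * \<phi> k) \<in> Collect s_additive"
  proof (intro ballI allI)
    fix \<psi> \<phi> and c :: real assume "\<psi> \<in> Collect s_additive" "\<phi> \<in> Collect s_additive"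
    then show "(\<lambda>k. \<psi> k + c * \<phi> k) \<in> Collect s_additive"
      unfolding mem_Collect_eq s_additive_def by (simp add: algebra_simps flip: distrib_left)
  qed
  have zero: "(\<lambda>_. 0) \<in> Collect s_additive" by (simp add: s_additive_def)
  have separating: "\<forall>i\<in>{..<N}. \<forall>j\<in>{..<N}. i \<noteq> j \<longrightarrow> (\<exists>\<psi>\<in>Collect s_additive. \<psi> i \<noteq> \<psi> j)"
    using log_moduli_separate by simp
  from exists_inj_on_in_linear_family[OF finite_lessThan separating linear zero]
  obtain \<psi> where \<psi>: "s_additive \<psi>" "inj_on \<psi> {..<N}" by blast
  have "2 * (card {..<N} - 1) \<le> card {x. poly Q x = 0 \<and> cmod x = 1}"
  proof (rule card_roots_on_circle_ge_ratios[OF Q_nonzero finite_lessThan _ _ _ inj_on_s \<psi>(2)])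
    have "0 \<in> {..<N}" using two_le_N by simp
    then show "{..<N} \<noteq> {}" by blast
    show "\<forall>i\<in>{..<N}. \<forall>j\<in>{..<N}. i \<noteq> j \<longrightarrow> poly Q (s i / s j) = 0"
      using s_ratio_root by simp
    show "\<forall>i\<in>{..<N}. cmod (s i) = 1" by (simp add: norm_s)
    show "\<forall>q\<in>{..<N}. \<forall>b\<in>{..<N}. \<forall>c\<in>{..<N}. s q * s q = s b * s c \<longrightarrow> \<psi> b + \<psi> c = 2 * \<psi> q"
      using \<psi>(1) by (simp add: s_additive_def)
  qed
  then show ?thesis by simp
qed

lemma N_ne_2: "N \<noteq> 2"
proof
  assume "N = 2"
  then obtain a where a: "A = {0, a}" "a \<noteq> 0"
    using card_A zero_in_A by (metis card_2_iff insert_commute insertE singletonD)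
  then have "1 + s 1 ^ a = 0"
    using s_root[of 1] \<open>N = 2\<close> finite_A by (simp add: poly_mask_poly)
  then have "s 1 ^ a = -1" by (simp add: add_eq_0_iff)
  then have "s 1 ^ (a * 2) = 1" by (simp add: power_mult)
  then show False using s_1_not_root_of_unity[of "a * 2"] a(2) by simp
qed

lemma degree_eq_card_roots:
  "degree (mask_poly A) = card {x. poly Q x = 0 \<and> cmod x = 1} + card {x. poly Q x = 0 \<and> cmod x \<noteq> 1}"
proof -
  have "degree (mask_poly A) = card {x. poly Q x = 0}"
    using rsquarefree_card_degree[OF Q_nonzero] rsquarefree_Q by simp
  also have "{x. poly Q x = 0} = {x. poly Q x = 0 \<and> cmod x = 1} \<union> {x. poly Q x = 0 \<and> cmod x \<noteq> 1}"
    by auto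
  also have "card \<dots> = card {x. poly Q x = 0 \<and> cmod x = 1} + card {x. poly Q x = 0 \<and> cmod x \<noteq> 1}"
    using poly_roots_finite[OF Q_nonzero] by (intro card_Un_disjoint) (auto elim: finite_subset[rotated])
  finally show ?thesis .
qed

end

theorem mainTheorem12:
  fixes A :: "nat set" and N :: nat and \<theta> :: "nat \<Rightarrow> real"
  assumes "finite A" and "0 \<in> A" and "N = card A" and "N \<ge> 2"
    and "irreducible (mask_poly A)"
    and "is_spectrum (mask_poly A) N \<theta>"
    and "\<theta> 1 \<notin> \<rat>"
  shows "card {x::complex. poly (map_poly of_rat (mask_poly A)) x = 0 \<and> cmod x \<noteq> 1} \<ge> N
         \<and> real (degree (mask_poly A)) \<ge> 5 * real N / 2"
proof -
  interpret mask_spectrum A N \<theta>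
    using assms by unfold_locales
  let ?on = "card {x. poly Q x = 0 \<and> cmod x = 1}"
  let ?off = "card {x. poly Q x = 0 \<and> cmod x \<noteq> 1}"
  have "?off = 2 * card {x. poly Q x = 0 \<and> cmod x > 1}"
    using Q_nonzero root_nonzero roots_closed_under_inverse by (intro card_roots_off_circle_eq_double) auto
  then have "5 * N \<le> 2 * (?on + ?off)"
    using card_roots_off_circle_ge card_roots_on_circle_ge two_le_N N_ne_2 by presburger
  then show ?thesis
    using card_roots_off_circle_ge degree_eq_card_roots by simp
qed

end
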